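(* Let $F(z)=\sum_{k=0}^\infty b_k z^k\in\mathcal{B}$ with $b_1=a\in(0,1)$, and let $0<r\le 1/\sqrt3$. Then \[ \sum_{k=2}^\infty k|b_k|^2r^{2k}\le \frac{3(9-4a^2)^2}{64a^4}\left(-\log\Big(1-\frac{4a^2r^2}{3}\Big)-\frac{4a^2r^2}{3}\right). \]
   Context: $\mathbb{D}$ denotes the open unit disc. $\mathcal{B}$ is the class of functions $F$ analytic in $\mathbb{D}$ satisfying $|F'(z)|\le \frac{1}{1-|z|^2}$ for all $z\in\mathbb{D}$. For $F\in\mathcal{B}$ we write its Taylor expansion as $F(z)=\sum_{k=0}^\infty b_k z^k$. *)

theory Defs
  imports "HOL-Complex_Analysis.Complex_Analysis"
begin

definition bloch_class :: "(complex \<Rightarrow> complex) set" where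
  "bloch_class = {F. F holomorphic_on ball 0 1 \<and>
      (\<forall>z \<in> ball 0 1. norm (deriv F z) \<le> 1 / (1 - (norm z)^2))}"

definition taylor_coeff :: "(complex \<Rightarrow> complex) \<Rightarrow> nat \<Rightarrow> complex" where
  "taylor_coeff F k = (deriv ^^ k) F 0 / of_nat (fact k)"

end

theory Submission
  imports Defs
begin

text \<open>
  Put g = F', a = g(0) and R = 1/sqrt 3. The Bloch condition gives |g| < 3/2 on |w| < R, so the
  Schwarz lemma, applied to g followed by the automorphism of the disc of radius 3/2 that moves a
  to 0, yields |g(w) - a| \<le> (|w|/R) |K - \<alpha> (g(w) - a)| with K = (9 - 4a^2)/6 and \<alpha> = 2a/3.
  Comparing the Parseval sums of both sides on the circle |w| = sqrt t gives, for 0 < t < 1/3,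
  \<Sum> k^2 |b_k|^2 t^(k-1) \<le> (9 - 4a^2)^2/12 \<cdot> t/(1 - 4a^2 t/3), summed over k \<ge> 2, and
  integrating this inequality between power series over [0, r^2] gives the claim.
\<close>

lemma taylor_coeff_deriv:
  "taylor_coeff (deriv f) n = of_nat (Suc n) * taylor_coeff f (Suc n)"
  unfolding taylor_coeff_def funpow_Suc_right o_def fact_Suc of_nat_mult
  by (simp add: field_simps del: of_nat_Suc)

lemma taylor_coeff_const_plus_cmult:
  assumes "f holomorphic_on S" "open S" "0 \<in> S"
  shows "taylor_coeff (\<lambda>w. c + \<alpha> * f w) n =
           (if n = 0 then c + \<alpha> * f 0 else \<alpha> * taylor_coeff f n)"
proof -
  have "(deriv ^^ n) (\<lambda>w. c + \<alpha> * f w) 0 = (deriv ^^ n) (\<lambda>w. c) 0 + (deriv ^^ n) (\<lambda>w. \<alpha> * f w) 0"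
    using assms by (intro higher_deriv_add) (auto intro!: holomorphic_intros)
  also have "(deriv ^^ n) (\<lambda>w. \<alpha> * f w) 0 = \<alpha> * (deriv ^^ n) f 0"
    using assms by (intro higher_deriv_cmult) auto
  finally show ?thesis
    unfolding taylor_coeff_def by (auto simp: add_divide_distrib)
qed

lemma taylor_coeff_deriv_diff_const:
  assumes "f holomorphic_on S" "open S" "0 \<in> S"
  shows "taylor_coeff (\<lambda>w. deriv f w - c) (Suc n) =
           of_nat (Suc (Suc n)) * taylor_coeff f (Suc (Suc n))"
proof -
  have "taylor_coeff (\<lambda>w. - c + 1 * deriv f w) (Suc n) = taylor_coeff (deriv f) (Suc n)"
    using assms holomorphic_deriv by (subst taylor_coeff_const_plus_cmult) auto
  then show ?thesis
    by (simp add: taylor_coeff_deriv)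
qed

lemma taylor_coeff_power_series_sums:
  assumes "f holomorphic_on ball 0 R" "norm w < R"
  shows "(\<lambda>n. taylor_coeff f n * w ^ n) sums f w"
  using holomorphic_power_series[OF assms(1), of w] assms(2) by (simp add: taylor_coeff_def)

lemma summable_norm_taylor_coeff:
  assumes "f holomorphic_on ball 0 R" "0 \<le> s" "s < R"
  shows "summable (\<lambda>n. norm (taylor_coeff f n) * s ^ n)"
proof -
  define t where "t = (s + R) / 2"
  have t: "s < t" "t < R"
    using assms by (auto simp: t_def)
  then have "norm (of_real t :: complex) < R"
    using assms by simp
  then have "summable (\<lambda>n. taylor_coeff f n * of_real t ^ n)"
    using taylor_coeff_power_series_sums[OF assms(1)] by (auto simp: sums_iff)
  then have "summable (\<lambda>n. norm (taylor_coeff f n * of_real s ^ n))"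
    by (rule powser_insidea) (use assms t in auto)
  then show ?thesis
    using assms(2) by (simp add: norm_mult norm_power)
qed

lemma norm_le_suminf_norm_taylor_coeff:
  assumes "f holomorphic_on ball 0 R" "norm w \<le> s" "s < R"
  shows "norm (f w) \<le> (\<Sum>n. norm (taylor_coeff f n) * s ^ n)"
proof -
  have sums: "(\<lambda>n. taylor_coeff f n * w ^ n) sums f w"
    using taylor_coeff_power_series_sums[OF assms(1)] assms by simp
  have le: "norm (taylor_coeff f n * w ^ n) \<le> norm (taylor_coeff f n) * s ^ n" for n
    using assms(2) by (auto simp: norm_mult norm_power intro!: mult_left_mono power_mono)
  have summable: "summable (\<lambda>n. norm (taylor_coeff f n) * s ^ n)"
    using summable_norm_taylor_coeff[OF assms(1) _ assms(3)] assms(2) norm_ge_zero order_trans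
    by blast
  have summable_norm_terms: "summable (\<lambda>n. norm (taylor_coeff f n * w ^ n))"
    using le by (intro summable_comparison_test'[OF summable]) simp
  have "norm (f w) \<le> (\<Sum>n. norm (taylor_coeff f n * w ^ n))"
    using summable_norm[OF summable_norm_terms] sums by (simp add: sums_iff)
  also have "\<dots> \<le> (\<Sum>n. norm (taylor_coeff f n) * s ^ n)"
    using le summable_norm_terms summable by (rule suminf_le)
  finally show ?thesis .
qed

text \<open>On the circle |z| = s one has cnj z = s^2/z, so this is Cauchy's formula for the
  n-th derivative.\<close>

lemma has_integral_circlepath_times_cnj_power:
  assumes hol: "f holomorphic_on ball 0 R" and s: "0 < s" "s < R"
  shows "((\<lambda>t. f (circlepath 0 s t) * cnj (circlepath 0 s t) ^ n) has_integral
            taylor_coeff f n * s ^ (2 * n)) {0..1}"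
proof -
  have "cball 0 s \<subseteq> ball (0::complex) R"
    using s by (auto simp: subset_eq)
  then have "continuous_on (cball 0 s) f" "f holomorphic_on ball 0 s"
    using hol holomorphic_on_imp_continuous_on holomorphic_on_subset ball_subset_cball
    by (blast intro: continuous_on_subset)+
  then have "((\<lambda>u. f u / (u - 0) ^ Suc n) has_contour_integral
      (2 * pi * \<i> / fact n * (deriv ^^ n) f 0)) (circlepath 0 s)"
    using s by (intro Cauchy_has_contour_integral_higher_derivative_circlepath) auto
  then have "((\<lambda>t. f (circlepath 0 s t) / circlepath 0 s t ^ Suc n *
        (2 * pi * \<i> * s * exp (2 * pi * \<i> * t)))
      has_integral (2 * pi * \<i> / fact n * (deriv ^^ n) f 0)) {0..1}"
    unfolding has_contour_integral_def
    by (rule has_integral_eq[rotated]) (simp add: vector_derivative_circlepath01)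
  from has_integral_mult_right[OF this, of "s ^ (2 * n) / (2 * pi * \<i>)"]
  show ?thesis
  proof (rule has_integral_eq_rhs[OF has_integral_eq, rotated])
    fix t :: real
    define e where "e = exp (2 * pi * \<i> * t)"
    have e: "cnj e = inverse e" "e \<noteq> 0" and circ: "circlepath 0 s t = s * e"
      by (simp_all add: e_def circlepath exp_cnj exp_minus)
    have "e ^ n * cnj e ^ n = 1"
      using e by (simp add: power_mult_distrib[symmetric])
    show "s ^ (2 * n) / (2 * pi * \<i>) *
        (f (circlepath 0 s t) / circlepath 0 s t ^ Suc n * (2 * pi * \<i> * s * exp (2 * pi * \<i> * t)))
       = f (circlepath 0 s t) * cnj (circlepath 0 s t) ^ n"
      unfolding circ e_def[symmetric] using e \<open>e ^ n * cnj e ^ n = 1\<close> s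
      by (simp add: field_simps power_mult power2_eq_square)
  qed (simp add: taylor_coeff_def field_simps)
qed

lemma Parseval_circlepath:
  assumes hol: "f holomorphic_on ball 0 R" and s: "0 < s" "s < R"
  shows "summable (\<lambda>n. (norm (taylor_coeff f n))\<^sup>2 * s ^ (2 * n)) \<and>
    ((\<lambda>t. (norm (f (circlepath 0 s t)))\<^sup>2) has_integral
       (\<Sum>n. (norm (taylor_coeff f n))\<^sup>2 * s ^ (2 * n))) {0..1}"
proof -
  txt \<open>Integrate |f|^2 = \<Sum> f \<cdot> cnj (c_n z^n) termwise; the partial sums are dominated by
    (\<Sum> |c_n| s^n)^2.\<close>
  define c where "c = taylor_coeff f"
  define \<gamma> where "\<gamma> = circlepath 0 s"
  define A where "A = (\<Sum>n. norm (c n) * s ^ n)"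
  have norm_\<gamma>: "norm (\<gamma> t) = s" for t
    using s by (simp add: \<gamma>_def circlepath norm_mult)
  have summable_A: "summable (\<lambda>n. norm (c n) * s ^ n)"
    unfolding c_def using summable_norm_taylor_coeff[OF hol] s by simp
  have partial_le_A: "(\<Sum>n\<in>I. norm (c n) * s ^ n) \<le> A" if "finite I" for I
    unfolding A_def using summable_A s that by (intro sum_le_suminf) auto
  have summable: "summable (\<lambda>n. (norm (c n))\<^sup>2 * s ^ (2 * n))"
  proof (rule summable_comparison_test'[OF summable_mult[OF summable_A, of A]])
    fix n
    have "(norm (c n))\<^sup>2 * s ^ (2 * n) = (norm (c n) * s ^ n) * (norm (c n) * s ^ n)"
      by (simp add: power_mult_distrib power_mult power2_eq_square mult_ac)
    also have "\<dots> \<le> A * (norm (c n) * s ^ n)"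
      using partial_le_A[of "{n}"] s by (intro mult_right_mono) auto
    finally show "norm ((norm (c n))\<^sup>2 * s ^ (2 * n)) \<le> A * (norm (c n) * s ^ n)"
      by simp
  qed
  define S where "S = (\<Sum>n. (norm (c n))\<^sup>2 * s ^ (2 * n))"
  define u where "u = (\<lambda>n t. f (\<gamma> t) * cnj (c n * \<gamma> t ^ n))"
  have partial_integral:
    "((\<lambda>t. \<Sum>n<N. u n t) has_integral (\<Sum>n<N. of_real ((norm (c n))\<^sup>2 * s ^ (2 * n)))) {0..1}"
    for N
  proof (intro has_integral_sum)
    fix n
    have integrand: "u n = (\<lambda>t. cnj (c n) * (f (\<gamma> t) * cnj (\<gamma> t) ^ n))"
      by (auto simp: u_def mult_ac)
    have coeff_product: "cnj (c n) * (c n * s ^ (2 * n)) = of_real ((norm (c n))\<^sup>2 * s ^ (2 * n))"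
      by (simp add: complex_norm_square[symmetric] mult_ac)
    show "(u n has_integral of_real ((norm (c n))\<^sup>2 * s ^ (2 * n))) {0..1}"
      unfolding integrand coeff_product[symmetric] unfolding c_def \<gamma>_def
      by (rule has_integral_mult_right[OF has_integral_circlepath_times_cnj_power[OF hol s]])
  qed simp
  have partial_bound: "norm (\<Sum>n<N. u n t) \<le> A * A" for N t
  proof -
    have "norm (\<Sum>n<N. u n t) \<le> norm (f (\<gamma> t)) * (\<Sum>n<N. norm (c n) * s ^ n)"
      using norm_sum[of "\<lambda>n. u n t"]
      by (simp add: u_def norm_mult norm_power norm_\<gamma> sum_distrib_left)
    also have "\<dots> \<le> A * A"
      using norm_le_suminf_norm_taylor_coeff[OF hol, of "\<gamma> t" s] partial_le_A[of "{..<N}"] s norm_\<gamma>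
      by (intro mult_mono) (auto simp: A_def c_def intro: order_trans[OF norm_ge_zero] sum_nonneg)
    finally show ?thesis .
  qed
  have partial_limit: "(\<lambda>N. \<Sum>n<N. u n t) \<longlonglongrightarrow> of_real ((norm (f (\<gamma> t)))\<^sup>2)" for t
  proof -
    have "(\<lambda>n. c n * \<gamma> t ^ n) sums f (\<gamma> t)"
      unfolding c_def using taylor_coeff_power_series_sums[OF hol] norm_\<gamma> s by simp
    then have "(\<lambda>n. f (\<gamma> t) * cnj (c n * \<gamma> t ^ n)) sums (f (\<gamma> t) * cnj (f (\<gamma> t)))"
      by (intro sums_mult sums_cnj[THEN iffD2])
    then show ?thesis
      by (simp add: u_def sums_def complex_norm_square[symmetric])
  qed
  have integral_limit: "(\<lambda>N. \<Sum>n<N. complex_of_real ((norm (c n))\<^sup>2 * s ^ (2 * n))) \<longlonglongrightarrow> of_real S"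
    using sums_of_real[OF summable_sums[OF summable]] by (simp add: S_def sums_def)
  have "((\<lambda>t. complex_of_real ((norm (f (\<gamma> t)))\<^sup>2)) has_integral of_real S) {0..1}"
    using partial_bound partial_limit
    by (intro has_integral_dominated_convergence[OF partial_integral _ _ _ integral_limit]) auto
  from has_integral_linear[OF this bounded_linear_Re]
  show ?thesis
    using summable by (simp add: o_def S_def c_def \<gamma>_def)
qed

lemma Parseval_circlepath_le:
  assumes "f holomorphic_on ball 0 R" "g holomorphic_on ball 0 R" "0 < s" "s < R"
    and "\<And>w. norm w = s \<Longrightarrow> norm (f w) \<le> c * norm (g w)"
  shows "(\<Sum>n. (norm (taylor_coeff f n))\<^sup>2 * s ^ (2 * n)) \<le>
           c\<^sup>2 * (\<Sum>n. (norm (taylor_coeff g n))\<^sup>2 * s ^ (2 * n))"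
proof (rule has_integral_le)
  show "((\<lambda>t. (norm (f (circlepath 0 s t)))\<^sup>2) has_integral
      (\<Sum>n. (norm (taylor_coeff f n))\<^sup>2 * s ^ (2 * n))) {0..1}"
    using Parseval_circlepath[OF assms(1,3,4)] by blast
  show "((\<lambda>t. c\<^sup>2 * (norm (g (circlepath 0 s t)))\<^sup>2) has_integral
      c\<^sup>2 * (\<Sum>n. (norm (taylor_coeff g n))\<^sup>2 * s ^ (2 * n))) {0..1}"
    by (intro has_integral_mult_right) (use Parseval_circlepath[OF assms(2,3,4)] in blast)
  fix t :: real
  have "norm (circlepath 0 s t) = s"
    using assms(3) by (simp add: circlepath norm_mult)
  then have "norm (f (circlepath 0 s t)) \<le> c * norm (g (circlepath 0 s t))"
    by (rule assms(5))
  then show "(norm (f (circlepath 0 s t)))\<^sup>2 \<le> c\<^sup>2 * (norm (g (circlepath 0 s t)))\<^sup>2"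
    by (metis norm_ge_zero power_mono power_mult_distrib)
qed

lemma norm_Moebius_numerator_less:
  fixes w a :: complex
  assumes "norm a < M" "norm w < M"
  shows "norm (of_real M * (w - a)) < norm (of_real (M\<^sup>2) - cnj a * w)"
proof -
  have "(norm (of_real (M\<^sup>2) - cnj a * w))\<^sup>2 - (norm (of_real M * (w - a)))\<^sup>2
      = (M\<^sup>2 - (norm a)\<^sup>2) * (M\<^sup>2 - (norm w)\<^sup>2)"
    by (simp only: cmod_power2) (simp add: power2_eq_square algebra_simps)
  also have "\<dots> > 0"
    using assms by (intro mult_pos_pos) (auto intro!: power_strict_mono simp: abs_less_iff)
  finally show ?thesis
    by (simp add: power_less_imp_less_base)
qed

lemma Schwarz_Moebius_bound:
  fixes g :: "complex \<Rightarrow> complex"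
  assumes hol: "g holomorphic_on ball 0 R" and R: "0 < R"
    and bound: "\<And>w. norm w < R \<Longrightarrow> norm (g w) < M" and w: "norm w < R"
  shows "norm (of_real M * (g w - g 0)) \<le> norm w / R * norm (of_real (M\<^sup>2) - cnj (g 0) * g w)"
proof -
  define \<phi> where
    "\<phi> = (\<lambda>z. of_real M * (g (of_real R * z) - g 0) /
               (of_real (M\<^sup>2) - cnj (g 0) * g (of_real R * z)))"
  have Moebius: "norm (of_real M * (g v - g 0)) < norm (of_real (M\<^sup>2) - cnj (g 0) * g v)"
    if "norm v < R" for v
    using R that by (intro norm_Moebius_numerator_less bound) auto
  have scaled: "norm (of_real R * z) < R" if "norm z < 1" for z :: complex
    using that R by (simp add: norm_mult)
  have "(\<lambda>z. g (of_real R * z)) holomorphic_on ball 0 1"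
    using scaled
    by (intro holomorphic_on_compose_gen[of _ _ g "ball 0 R", unfolded o_def, OF _ hol])
      (auto intro!: holomorphic_intros)
  then have "\<phi> holomorphic_on ball 0 1"
    unfolding \<phi>_def using Moebius[OF scaled] by (intro holomorphic_intros) force+
  moreover have "\<phi> 0 = 0"
    by (simp add: \<phi>_def)
  moreover have "norm (\<phi> z) < 1" if "norm z < 1" for z
    using Moebius[OF scaled[OF that]] by (simp add: \<phi>_def norm_divide divide_less_eq)
  moreover have "norm (w / R) < 1"
    using w R by (simp add: norm_divide)
  ultimately have "norm (\<phi> (w / R)) \<le> norm (w / R)"
    by (rule Schwarz_Lemma(1))
  moreover have "of_real (M\<^sup>2) - cnj (g 0) * g w \<noteq> 0"
    using Moebius[OF w] by auto
  ultimately show ?thesis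
    using R by (simp add: \<phi>_def norm_divide divide_le_eq field_simps)
qed

lemma square_sum_taylor_coeff_le_of_Schwarz_bound:
  fixes f :: "complex \<Rightarrow> complex" and K \<alpha> :: complex
  assumes hol: "f holomorphic_on ball 0 R" and f0: "f 0 = 0" and s: "0 < s" "s < R"
    and bound: "\<And>w. norm w < R \<Longrightarrow> norm (f w) \<le> norm w / R * norm (K - \<alpha> * f w)"
    and small: "norm \<alpha> * s < R"
  shows "summable (\<lambda>n. (norm (taylor_coeff f n))\<^sup>2 * s ^ (2 * n)) \<and>
    (\<Sum>n. (norm (taylor_coeff f n))\<^sup>2 * s ^ (2 * n)) \<le> (norm K)\<^sup>2 * s\<^sup>2 / (R\<^sup>2 - (norm \<alpha>)\<^sup>2 * s\<^sup>2)"
proof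
  define S where "S = (\<Sum>n. (norm (taylor_coeff f n))\<^sup>2 * s ^ (2 * n))"
  show summable: "summable (\<lambda>n. (norm (taylor_coeff f n))\<^sup>2 * s ^ (2 * n))"
    using Parseval_circlepath[OF hol s] by blast
  define g where "g = (\<lambda>w. K + (- \<alpha>) * f w)"
  have hol_g: "g holomorphic_on ball 0 R"
    unfolding g_def by (intro holomorphic_intros hol)
  have "taylor_coeff f 0 = 0"
    using f0 by (simp add: taylor_coeff_def)
  then have "(norm (taylor_coeff g n))\<^sup>2 * s ^ (2 * n) =
      (if n = 0 then (norm K)\<^sup>2 else 0) + (norm \<alpha>)\<^sup>2 * ((norm (taylor_coeff f n))\<^sup>2 * s ^ (2 * n))"
    for n
    unfolding g_def using hol s f0
    by (subst taylor_coeff_const_plus_cmult[of _ "ball 0 R"])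
      (auto simp: norm_mult power_mult_distrib)
  moreover have "(\<lambda>n. (if n = 0 then (norm K)\<^sup>2 else 0) +
      (norm \<alpha>)\<^sup>2 * ((norm (taylor_coeff f n))\<^sup>2 * s ^ (2 * n))) sums ((norm K)\<^sup>2 + (norm \<alpha>)\<^sup>2 * S)"
    unfolding S_def
    by (intro sums_add sums_single[of 0, simplified] sums_mult summable_sums summable)
  ultimately have g_sum:
    "(\<Sum>n. (norm (taylor_coeff g n))\<^sup>2 * s ^ (2 * n)) = (norm K)\<^sup>2 + (norm \<alpha>)\<^sup>2 * S"
    by (simp add: sums_iff)
  have "S \<le> (s / R)\<^sup>2 * ((norm K)\<^sup>2 + (norm \<alpha>)\<^sup>2 * S)"
    unfolding g_sum[symmetric] unfolding S_def
  proof (rule Parseval_circlepath_le[OF hol hol_g s])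
    fix w :: complex
    assume "norm w = s"
    then show "norm (f w) \<le> s / R * norm (g w)"
      using bound[of w] s by (simp add: g_def)
  qed
  then have "S * (R\<^sup>2 - (norm \<alpha>)\<^sup>2 * s\<^sup>2) \<le> (norm K)\<^sup>2 * s\<^sup>2"
    using s by (simp add: field_simps)
  moreover have "(norm \<alpha> * s)\<^sup>2 < R\<^sup>2"
    using small s by (intro power_strict_mono) auto
  ultimately show "S \<le> (norm K)\<^sup>2 * s\<^sup>2 / (R\<^sup>2 - (norm \<alpha>)\<^sup>2 * s\<^sup>2)"
    by (simp add: le_divide_eq power_mult_distrib)
qed

lemma powser_antiderivative_le:
  fixes e :: "nat \<Rightarrow> real" and h H :: "real \<Rightarrow> real"
  assumes nonneg: "\<And>n. 0 \<le> e n" and summable: "summable (\<lambda>n. e n * y ^ n)" "x < y"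
    and bound: "\<And>t. 0 < t \<Longrightarrow> t < x \<Longrightarrow> (\<Sum>n. e n * t ^ n) \<le> h t"
    and H: "\<And>t. 0 \<le> t \<Longrightarrow> t \<le> x \<Longrightarrow> (H has_real_derivative h t) (at t)" "H 0 = 0"
    and x: "0 \<le> x"
  shows "summable (\<lambda>n. e n / Suc n * x ^ Suc n) \<and> (\<Sum>n. e n / Suc n * x ^ Suc n) \<le> H x"
proof -
  define l where "l n = (if n = 0 then 0 else e (n - 1) / n)" for n
  define L where "L t = (\<Sum>n. l n * t ^ n)" for t
  have "summable (\<lambda>n. l (Suc n) * y ^ Suc n)"
  proof (rule summable_comparison_test'[OF summable_mult[OF summable(1), of y]])
    fix n
    have "e n / Suc n * y ^ Suc n = y * (e n * y ^ n) / Suc n"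
      by simp
    also have "\<dots> \<le> y * (e n * y ^ n) / 1"
      using nonneg[of n] x summable(2) by (intro divide_left_mono) auto
    finally show "norm (l (Suc n) * y ^ Suc n) \<le> y * (e n * y ^ n)"
      using nonneg[of n] x summable(2) by (simp add: l_def)
  qed
  then have summable_l: "summable (\<lambda>n. l n * y ^ n)"
    by (rule summable_Suc_iff[THEN iffD1])
  have "diffs l = e"
    by (auto simp: diffs_def l_def)
  then have L': "(L has_real_derivative (\<Sum>n. e n * t ^ n)) (at t)" if "0 \<le> t" "t \<le> x" for t
    unfolding L_def using termdiffs_strong[OF summable_l] that summable(2) by simp
  have "H 0 - L 0 \<le> H x - L x"
  proof (rule DERIV_nonneg_imp_increasing_open[OF x])
    fix t
    assume "0 < t" "t < x"
    then show "\<exists>d. ((\<lambda>t. H t - L t) has_real_derivative d) (at t) \<and> 0 \<le> d"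
      using H(1) L' bound[of t] by (intro exI[of _ "h t - (\<Sum>n. e n * t ^ n)"] conjI DERIV_diff) auto
  next
    show "continuous_on {0..x} (\<lambda>t. H t - L t)"
      using H(1) L'
      by (intro continuous_at_imp_continuous_on ballI DERIV_isCont[OF DERIV_diff]) auto
  qed
  moreover have "L 0 = 0"
    by (simp add: L_def l_def)
  moreover have summable_x: "summable (\<lambda>n. l n * x ^ n)"
    using powser_inside[OF summable_l, of x] x summable(2) by simp
  moreover have "(\<Sum>n. e n / Suc n * x ^ Suc n) = L x"
    using suminf_split_head[OF summable_x] by (simp add: L_def l_def)
  ultimately show ?thesis
    using H(2) summable_Suc_iff[of "\<lambda>n. l n * x ^ n"] by (simp add: l_def)
qed

lemma has_real_derivative_neg_ln_one_minus:
  assumes "\<beta> \<noteq> 0" "\<beta> * t < 1"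
  shows "((\<lambda>t. c / \<beta>\<^sup>2 * (- ln (1 - \<beta> * t) - \<beta> * t)) has_real_derivative
           c * t / (1 - \<beta> * t)) (at t)"
  using assms by (auto intro!: derivative_eq_intros simp: field_simps power2_eq_square)

lemma bloch_class_deriv_norm_less:
  assumes "F \<in> bloch_class" "norm w < 1 / sqrt 3"
  shows "norm (deriv F w) < 3 / 2"
proof -
  have "(norm w)\<^sup>2 < (1 / sqrt 3)\<^sup>2"
    using assms(2) by (intro power_strict_mono) auto
  then have w2: "(norm w)\<^sup>2 < 1 / 3"
    by (simp add: power_divide)
  then have "norm w < 1"
    using power2_less_imp_less[of "norm w" 1] by simp
  then have "norm (deriv F w) \<le> 1 / (1 - (norm w)\<^sup>2)"
    using assms(1) by (simp add: bloch_class_def)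
  also have "\<dots> < 3 / 2"
    using w2 by (simp add: divide_less_eq)
  finally show ?thesis .
qed

lemma bloch_class_deriv_square_sum_le:
  fixes a t :: real
  assumes F: "F \<in> bloch_class" and a: "taylor_coeff F 1 = of_real a" and t: "0 < t" "t < 1 / 3"
  shows "summable (\<lambda>n. (norm (taylor_coeff (\<lambda>w. deriv F w - a) n))\<^sup>2 * t ^ n) \<and>
    (\<Sum>n. (norm (taylor_coeff (\<lambda>w. deriv F w - a) n))\<^sup>2 * t ^ n)
      \<le> (9 - 4 * a\<^sup>2)\<^sup>2 / 12 * t / (1 - 4 * a\<^sup>2 * t / 3)"
proof -
  define R :: real where "R = 1 / sqrt 3"
  define K :: complex where "K = of_real ((9 - 4 * a\<^sup>2) / 6)"
  define \<alpha> :: complex where "\<alpha> = of_real (2 * a / 3)"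
  have R: "0 < R" "R < 1" "R\<^sup>2 = 1 / 3"
    by (auto simp: R_def power_divide)
  have "sqrt t < sqrt (1 / 3)"
    using t by simp
  then have sqrt_t: "0 < sqrt t" "sqrt t < R"
    using t by (auto simp: R_def real_sqrt_divide)
  have "deriv F holomorphic_on ball 0 1"
    using F by (auto simp: bloch_class_def intro: holomorphic_deriv)
  then have hol: "deriv F holomorphic_on ball 0 R"
    by (rule holomorphic_on_subset) (use R in auto)
  have "deriv F 0 = a"
    using a by (simp add: taylor_coeff_def)
  have bound: "norm (deriv F w - a) \<le> norm w / R * norm (K - \<alpha> * (deriv F w - a))"
    if "norm w < R" for w
  proof -
    have "3 / 2 * norm (deriv F w - a) = norm (of_real (3 / 2) * (deriv F w - deriv F 0))"
      by (simp only: \<open>deriv F 0 = a\<close> norm_mult norm_of_real abs_of_pos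
          zero_less_divide_iff zero_less_numeral)
    also have "\<dots> \<le> norm w / R * norm (of_real ((3 / 2)\<^sup>2) - cnj (deriv F 0) * deriv F w)"
      using that R bloch_class_deriv_norm_less[OF F]
      by (intro Schwarz_Moebius_bound[OF hol]) (auto simp: R_def)
    also have "of_real ((3 / 2)\<^sup>2) - cnj (deriv F 0) * deriv F w =
        of_real (3 / 2) * (K - \<alpha> * (deriv F w - a))"
      using \<open>deriv F 0 = a\<close> by (simp add: K_def \<alpha>_def field_simps power2_eq_square)
    also have "norm w / R * norm (of_real (3 / 2) * (K - \<alpha> * (deriv F w - a)))
        = 3 / 2 * (norm w / R * norm (K - \<alpha> * (deriv F w - a)))"
      by (simp only: norm_mult norm_of_real abs_of_pos zero_less_divide_iff zero_less_numeral
          mult_ac)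
    finally show ?thesis
      by simp
  qed
  have small: "norm \<alpha> * sqrt t < R"
  proof -
    have "norm \<alpha> < 1"
      using bloch_class_deriv_norm_less[OF F, of 0] \<open>deriv F 0 = a\<close> by (simp add: \<alpha>_def)
    then have "norm \<alpha> * sqrt t < 1 * sqrt t"
      using sqrt_t by (intro mult_strict_right_mono) auto
    then show ?thesis
      using sqrt_t by linarith
  qed
  have "summable (\<lambda>n. (norm (taylor_coeff (\<lambda>w. deriv F w - a) n))\<^sup>2 * sqrt t ^ (2 * n)) \<and>
    (\<Sum>n. (norm (taylor_coeff (\<lambda>w. deriv F w - a) n))\<^sup>2 * sqrt t ^ (2 * n))
      \<le> (norm K)\<^sup>2 * (sqrt t)\<^sup>2 / (R\<^sup>2 - (norm \<alpha>)\<^sup>2 * (sqrt t)\<^sup>2)"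
    using sqrt_t bound small \<open>deriv F 0 = a\<close>
    by (intro square_sum_taylor_coeff_le_of_Schwarz_bound holomorphic_on_diff[OF hol holomorphic_on_const]) auto
  moreover have "(norm K)\<^sup>2 * (sqrt t)\<^sup>2 / (R\<^sup>2 - (norm \<alpha>)\<^sup>2 * (sqrt t)\<^sup>2)
      = (9 - 4 * a\<^sup>2)\<^sup>2 / 12 * t / (1 - 4 * a\<^sup>2 * t / 3)"
  proof -
    have norms: "(norm K)\<^sup>2 = (9 - 4 * a\<^sup>2)\<^sup>2 / 36" "(norm \<alpha>)\<^sup>2 = 4 * a\<^sup>2 / 9"
      unfolding K_def \<alpha>_def norm_of_real power2_abs
      by (simp_all add: power_divide power_mult_distrib)
    have "(norm \<alpha> * sqrt t)\<^sup>2 < R\<^sup>2"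
      using small t by (intro power_strict_mono) auto
    then have "4 * a\<^sup>2 * t < 3"
      using t by (simp add: power_mult_distrib norms R(3) mult_ac)
    then show ?thesis
      using t by (simp add: norms R(3) field_simps)
  qed
  ultimately show ?thesis
    using t by (simp add: power_mult)
qed

lemma bloch_class_deriv_square_sum_antiderivative_le:
  fixes a x :: real
  assumes F: "F \<in> bloch_class" and a: "taylor_coeff F 1 = of_real a" "a \<noteq> 0"
    and x: "0 \<le> x" "x \<le> 1 / 3"
  shows "summable (\<lambda>n. (norm (taylor_coeff (\<lambda>w. deriv F w - a) n))\<^sup>2 / Suc n * x ^ Suc n) \<and>
    (\<Sum>n. (norm (taylor_coeff (\<lambda>w. deriv F w - a) n))\<^sup>2 / Suc n * x ^ Suc n)
      \<le> 3 * (9 - 4 * a\<^sup>2)\<^sup>2 / (64 * a ^ 4) * (- ln (1 - 4 * a\<^sup>2 * x / 3) - 4 * a\<^sup>2 * x / 3)"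
proof -
  define f where "f = (\<lambda>w. deriv F w - of_real a)"
  define e where "e n = (norm (taylor_coeff f n))\<^sup>2" for n
  define \<beta> where "\<beta> = 4 * a\<^sup>2 / 3"
  define c where "c = (9 - 4 * a\<^sup>2)\<^sup>2 / 12"
  have "\<bar>a\<bar> < 3 / 2"
    using bloch_class_deriv_norm_less[OF F, of 0] a(1) by (simp add: taylor_coeff_def)
  then have "a\<^sup>2 < (3 / 2)\<^sup>2"
    by (metis abs_ge_zero power2_abs power_strict_mono zero_less_numeral)
  then have "\<beta> * (1 / 3) < 1"
    by (simp add: \<beta>_def power_divide)
  moreover have "\<beta> * t \<le> \<beta> * (1 / 3)" if "t \<le> x" for t
    using that x by (intro mult_left_mono) (auto simp: \<beta>_def)
  ultimately have \<beta>: "\<beta> \<noteq> 0" "\<beta> * t < 1" if "t \<le> x" for t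
    using that a(2) by (simp add: \<beta>_def, fastforce)
  have "f holomorphic_on ball 0 1"
    using F unfolding f_def bloch_class_def by (auto intro!: holomorphic_intros)
  then have summable_half: "summable (\<lambda>n. e n * (1 / 2) ^ n)"
    using Parseval_circlepath[of f 1 "1 / sqrt 2"] by (simp add: e_def power_mult power_divide)
  have "summable (\<lambda>n. e n / Suc n * x ^ Suc n) \<and>
      (\<Sum>n. e n / Suc n * x ^ Suc n) \<le> c / \<beta>\<^sup>2 * (- ln (1 - \<beta> * x) - \<beta> * x)"
  proof (rule powser_antiderivative_le[OF _ summable_half, where h = "\<lambda>t. c * t / (1 - \<beta> * t)"])
    show "(\<Sum>n. e n * t ^ n) \<le> c * t / (1 - \<beta> * t)" if "0 < t" "t < x" for t
      using bloch_class_deriv_square_sum_le[OF F a(1), of t] that x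
      by (auto simp: e_def f_def c_def \<beta>_def)
  qed (use x \<beta> has_real_derivative_neg_ln_one_minus in \<open>auto simp: e_def\<close>)
  moreover have "c / \<beta>\<^sup>2 = 3 * (9 - 4 * a\<^sup>2)\<^sup>2 / (64 * a ^ 4)" "\<beta> * x = 4 * a\<^sup>2 * x / 3"
    using a(2) by (simp_all add: c_def \<beta>_def field_simps)
  ultimately show ?thesis
    by (simp add: e_def f_def)
qed

theorem corollary1:
  fixes F :: "complex \<Rightarrow> complex" and a r :: real
  assumes "F \<in> bloch_class"
    and "taylor_coeff F 1 = complex_of_real a"
    and "0 < a" and "a < 1"
    and "0 < r" and "r \<le> 1 / sqrt 3"
  shows "summable (\<lambda>k. real (k + 2) * (norm (taylor_coeff F (k + 2)))^2 * r ^ (2 * (k + 2)))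
    \<and> (\<Sum>k. real (k + 2) * (norm (taylor_coeff F (k + 2)))^2 * r ^ (2 * (k + 2)))
        \<le> 3 * (9 - 4 * a^2)^2 / (64 * a^4) *
           (- ln (1 - 4 * a^2 * r^2 / 3) - 4 * a^2 * r^2 / 3)"
proof -
  define g where "g n = (norm (taylor_coeff (\<lambda>w. deriv F w - a) n))\<^sup>2 / Suc n * (r\<^sup>2) ^ Suc n" for n
  have "r\<^sup>2 \<le> (1 / sqrt 3)\<^sup>2"
    using assms(5,6) by (intro power_mono) auto
  then have "summable g \<and> suminf g \<le> 3 * (9 - 4 * a^2)^2 / (64 * a^4) *
      (- ln (1 - 4 * a^2 * r^2 / 3) - 4 * a^2 * r^2 / 3)"
    unfolding g_def using assms(3)
    by (intro bloch_class_deriv_square_sum_antiderivative_le[OF assms(1,2)])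
      (auto simp: power_divide)
  moreover have "F holomorphic_on ball 0 1"
    using assms(1) by (simp add: bloch_class_def)
  then have "(\<lambda>k. real (k + 2) * (norm (taylor_coeff F (k + 2)))\<^sup>2 * r ^ (2 * (k + 2))) =
      (\<lambda>k. g (Suc k))"
    using taylor_coeff_deriv_diff_const[of F "ball 0 1" "of_real a"]
    by (simp add: g_def norm_mult power_mult_distrib power_mult power2_eq_square mult_ac
        del: of_nat_Suc)
  moreover have "g 0 = 0"
    using assms(2) by (simp add: g_def taylor_coeff_def)
  ultimately show ?thesis
    using summable_Suc_iff[of g] suminf_split_head[of g] by simp
qed

end
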